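(* With the notation of the context, let $\beta^*=\inf_{x\in\Delta}F(x)$. Then there exists $x^*\in\Delta$ with $F(x^* )=\beta^*$.
   Context: Fix an integer $n\ge2$ and free generators $\xi_1,\dots,\xi_n$ of a free group; throughout $i,j,k\in\{1,\dots,n\}$ and $t,s,p\in\{-1,+1\}$. Let $\Psi$ be the set of reduced words $\xi_i^{2t}$; $\xi_i^t\xi_j^{2s}$ ($i\ne j$); $\xi_i^t\xi_j^s\xi_k^p$ ($i\ne j$, $j\ne k$). For a letter $\xi_a^x$ let $S(\xi_a^x)\subset\Psi$ be the set of words in $\Psi$ beginning with $\xi_a^x$, namely $\{\xi_a^{2x}\}\cup\{\xi_a^x\xi_j^{2s}\}\cup\{\xi_a^x\xi_j^s\xi_k^p\}$; for $a\ne b$ let $S(\xi_a^x\xi_b^y)=\{\xi_a^x\xi_b^{2y}\}\cup\{\xi_a^x\xi_b^y\xi_k^p: k\ne b\}$. A relation $r$ is a pair $(\psi_r,\Psi_r)$ with $\psi_r\in\Psi$, $\Psi_r\subseteq\Psi$. Let $\mathcal{F}$ be the collection of the following relations (indices $i_0\ne j_0$, in type 5a $i_0,j_0,k_0$ pairwise distinct, all signs arbitrary): 1a: $\psi_r=\xi_{i_0}^{2t_0}$, $\Psi_r=\Psi\setminus S(\xi_{i_0}^{t_0})$; 2b: $\psi_r=\xi_{i_0}^{t_0}\xi_{j_0}^{2s_0}$, $\Psi_r=\Psi\setminus S(\xi_{i_0}^{t_0}\xi_{j_0}^{s_0})$; 3a: $\psi_r=\xi_{i_0}^{t_0}\xi_{j_0}^{s_0}\xi_{i_0}^{t_0}$,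 $\Psi_r=\Psi\setminus S(\xi_{j_0}^{s_0}\xi_{i_0}^{t_0})$; 4b: $\psi_r=\xi_{i_0}^{t_0}\xi_{j_0}^{s_0}\xi_{i_0}^{-t_0}$, $\Psi_r=S(\xi_{i_0}^{t_0})$; 5a: $\psi_r=\xi_{i_0}^{t_0}\xi_{j_0}^{s_0}\xi_{k_0}^{p_0}$, $\Psi_r=\Psi\setminus S(\xi_{j_0}^{s_0}\xi_{k_0}^{p_0})$. Let $\Delta=\{x\in\mathbb{R}^\Psi: x(\psi)>0\ \forall\psi,\ \sum_{\psi}x(\psi)=1\}$. For a relation $r$ and $x\in\Delta$ put $x_r=x(\psi_r)$, $X_r=\sum_{\psi\in\Psi_r}x(\psi)$, $f_r(x)=\frac{1-x_r}{x_r}\cdot\frac{1-X_r}{X_r}$, and $F(x)=\max_{r\in\mathcal{F}}f_r(x)$. *)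

theory Defs
  imports Complex_Main
begin

text \<open>A letter xi_i^t is encoded as the pair (i, t) with i in {1..n}, t in {-1, 1};
  a word is the list of its letters (so xi_i^{2t} = [(i,t),(i,t)]).\<close>

type_synonym letter = "nat \<times> int"
type_synonym word = "letter list"

definition Idx :: "nat \<Rightarrow> nat set" where "Idx n = {1..n}"
definition Sgn :: "int set" where "Sgn = {-1, 1}"

definition Psi :: "nat \<Rightarrow> word set" where
  "Psi n =
     {[(i,t),(i,t)] | i t. i \<in> Idx n \<and> t \<in> Sgn}
   \<union> {[(i,t),(j,s),(j,s)] | i j t s. i \<in> Idx n \<and> j \<in> Idx n \<and> t \<in> Sgn \<and> s \<in> Sgn \<and> i \<noteq> j}
   \<union> {[(i,t),(j,s),(k,p)] | i j k t s p. i \<in> Idx n \<and> j \<in> Idx n \<and> k \<in> Idx n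
        \<and> t \<in> Sgn \<and> s \<in> Sgn \<and> p \<in> Sgn \<and> i \<noteq> j \<and> j \<noteq> k}"

definition S1 :: "nat \<Rightarrow> letter \<Rightarrow> word set" where
  "S1 n l = {[l,l]}
     \<union> {[l,(j,s),(j,s)] | j s. j \<in> Idx n \<and> s \<in> Sgn \<and> j \<noteq> fst l}
     \<union> {[l,(j,s),(k,p)] | j s k p. j \<in> Idx n \<and> k \<in> Idx n \<and> s \<in> Sgn \<and> p \<in> Sgn
          \<and> j \<noteq> fst l \<and> k \<noteq> j}"

definition S2 :: "nat \<Rightarrow> letter \<Rightarrow> letter \<Rightarrow> word set" where
  "S2 n l m = {[l,m,m]} \<union> {[l,m,(k,p)] | k p. k \<in> Idx n \<and> p \<in> Sgn \<and> k \<noteq> fst m}"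

text \<open>The family of relations; a relation is a pair (psi_r, Psi_r).\<close>
definition Fam :: "nat \<Rightarrow> (word \<times> word set) set" where
  "Fam n =
     {([(i,t),(i,t)], Psi n - S1 n (i,t)) | i t. i \<in> Idx n \<and> t \<in> Sgn}
   \<union> {([(i,t),(j,s),(j,s)], Psi n - S2 n (i,t) (j,s)) | i j t s.
        i \<in> Idx n \<and> j \<in> Idx n \<and> t \<in> Sgn \<and> s \<in> Sgn \<and> i \<noteq> j}
   \<union> {([(i,t),(j,s),(i,t)], Psi n - S2 n (j,s) (i,t)) | i j t s.
        i \<in> Idx n \<and> j \<in> Idx n \<and> t \<in> Sgn \<and> s \<in> Sgn \<and> i \<noteq> j}
   \<union> {([(i,t),(j,s),(i,-t)], S1 n (i,t)) | i j t s.
        i \<in> Idx n \<and> j \<in> Idx n \<and> t \<in> Sgn \<and> s \<in> Sgn \<and> i \<noteq> j}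
   \<union> {([(i,t),(j,s),(k,p)], Psi n - S2 n (j,s) (k,p)) | i j k t s p.
        i \<in> Idx n \<and> j \<in> Idx n \<and> k \<in> Idx n \<and> t \<in> Sgn \<and> s \<in> Sgn \<and> p \<in> Sgn
        \<and> i \<noteq> j \<and> j \<noteq> k \<and> i \<noteq> k}"

definition Delta :: "nat \<Rightarrow> (word \<Rightarrow> real) set" where
  "Delta n = {x. (\<forall>\<psi>\<in>Psi n. x \<psi> > 0) \<and> (\<forall>\<psi>. \<psi> \<notin> Psi n \<longrightarrow> x \<psi> = 0)
               \<and> (\<Sum>\<psi>\<in>Psi n. x \<psi>) = 1}"

definition frel :: "word \<times> word set \<Rightarrow> (word \<Rightarrow> real) \<Rightarrow> real" where
  "frel r x = (let xr = x (fst r); Xr = (\<Sum>\<psi>\<in>snd r. x \<psi>)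
               in ((1 - xr) / xr) * ((1 - Xr) / Xr))"

definition FF :: "nat \<Rightarrow> (word \<Rightarrow> real) \<Rightarrow> real" where
  "FF n x = Max ((\<lambda>r. frel r x) ` Fam n)"

end

theory Submission
  imports Defs "HOL-Analysis.Analysis"
begin

text \<open>The sublevel sets of F are compact, so F attains its infimum. After clearing
  denominators they become closed subsets of the closed simplex, and none of their points lies
  on its boundary: if x vanishes at \<open>\<psi>\<^sub>r\<close>, the inequality of r pushes all mass into
  \<open>\<Psi>\<^sub>r\<close>, which (for a suitable r) kills a word \<open>\<xi>\<^sub>i\<^sup>t \<xi>\<^sub>j\<^sup>s \<xi>\<^sub>i\<^sup>-\<^sup>t\<close>; the type 4b relations
  of \<open>\<xi>\<^sub>i\<^sup>t \<xi>\<^sub>j\<^sup>s \<xi>\<^sub>i\<^sup>-\<^sup>t\<close> and \<open>\<xi>\<^sub>j\<^sup>s \<xi>\<^sub>i\<^sup>t \<xi>\<^sub>j\<^sup>-\<^sup>s\<close> then confine the mass to the empty set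
  \<open>S(\<xi>\<^sub>i\<^sup>t) \<inter> S(\<xi>\<^sub>j\<^sup>s)\<close>.\<close>

lemma INF_attained_if_compact_sublevels:
  fixes f :: "'a::t2_space \<Rightarrow> real"
  assumes "D \<noteq> {}" and "bdd_below (f ` D)" and compact: "\<And>M. compact {x\<in>D. f x \<le> M}"
  shows "\<exists>x\<in>D. f x = (INF y\<in>D. f y)"
proof -
  define \<beta> where "\<beta> = (INF y\<in>D. f y)"
  have below: "\<exists>y\<in>D. f y < M" if "\<beta> < M" for M
    using cInf_lessD[of "f ` D" M] that assms(1) unfolding \<beta>_def by auto
  have "{x\<in>D. f x \<le> \<beta> + 1} \<inter> (\<Inter>M\<in>{M. \<beta> < M}. {x\<in>D. f x \<le> M}) \<noteq> {}"
  proof (rule compact_imp_fip_image[OF compact])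
    show "closed {x\<in>D. f x \<le> M}" for M
      using compact by (rule compact_imp_closed)
    fix I
    assume I: "finite I" "I \<subseteq> {M. \<beta> < M}"
    then have "\<beta> < Min (insert (\<beta> + 1) I)"
      by (subst Min_gr_iff) auto
    then obtain y where "y \<in> D" "f y < Min (insert (\<beta> + 1) I)"
      using below by blast
    then have "y \<in> {x\<in>D. f x \<le> M}" if "M \<in> insert (\<beta> + 1) I" for M
      using I that by auto
    then show "{x\<in>D. f x \<le> \<beta> + 1} \<inter> (\<Inter>M\<in>I. {x\<in>D. f x \<le> M}) \<noteq> {}"
      by blast
  qed
  then obtain x where "x \<in> D" and le: "\<And>M. \<beta> < M \<Longrightarrow> f x \<le> M"
    by blast
  have "f x \<le> \<beta>"
  proof (rule field_le_epsilon)
    fix e :: real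
    assume "0 < e"
    then show "f x \<le> \<beta> + e"
      using le by simp
  qed
  moreover have "\<beta> \<le> f x"
    unfolding \<beta>_def using assms(2) \<open>x \<in> D\<close> by (rule cINF_lower)
  ultimately show ?thesis
    using \<open>x \<in> D\<close> unfolding \<beta>_def by (intro bexI[of _ x]) auto
qed

definition closed_simplex :: "'a set \<Rightarrow> ('a \<Rightarrow> real) set" where
  "closed_simplex P = {x. (\<forall>\<psi>\<in>P. 0 \<le> x \<psi>) \<and> (\<forall>\<psi>. \<psi> \<notin> P \<longrightarrow> x \<psi> = 0) \<and> sum x P = 1}"

lemma closed_simplex_sum_le_1:
  assumes "x \<in> closed_simplex P" "finite P" "R \<subseteq> P"
  shows "sum x R \<le> 1"
proof -
  have "sum x R \<le> sum x P"
    using assms by (intro sum_mono2) (auto simp: closed_simplex_def)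
  then show ?thesis
    using assms(1) by (simp add: closed_simplex_def)
qed

lemma closed_closed_simplex: "closed (closed_simplex P)"
proof -
  have "closed_simplex P = (\<Inter>\<psi>\<in>P. {x. 0 \<le> x \<psi>}) \<inter> (\<Inter>\<psi>\<in>-P. {x. x \<psi> = 0}) \<inter> {x. sum x P = 1}"
    by (auto simp: closed_simplex_def)
  also have "closed \<dots>"
    by (intro closed_Int closed_INT ballI closed_Collect_le closed_Collect_eq continuous_intros; simp)
  finally show ?thesis .
qed

lemma compact_closed_simplex:
  assumes "finite P"
  shows "compact (closed_simplex P)"
proof -
  let ?box = "Pi\<^sub>E UNIV (\<lambda>\<psi>. if \<psi> \<in> P then {0..1::real} else {0})"
  have "compactin (product_topology (\<lambda>_. euclidean) UNIV) ?box"
    by (subst compactin_PiE) auto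
  then have "compact (?box \<inter> closed_simplex P)"
    using closed_closed_simplex by (intro compact_Int_closed) (simp_all add: euclidean_product_topology)
  moreover have "closed_simplex P \<subseteq> ?box"
  proof
    fix x
    assume x: "x \<in> closed_simplex P"
    have "x \<psi> \<in> (if \<psi> \<in> P then {0..1} else {0})" for \<psi>
    proof (cases "\<psi> \<in> P")
      case True
      then have "x \<psi> \<le> 1"
        using closed_simplex_sum_le_1[OF x assms, of "{\<psi>}"] by simp
      with True x show ?thesis
        by (simp add: closed_simplex_def)
    next
      case False
      with x show ?thesis
        by (simp add: closed_simplex_def)
    qed
    then show "x \<in> ?box"
      by (simp add: PiE_iff)
  qed
  ultimately show ?thesis
    by (simp add: Int_absorb1)
qed

text \<open>With \<open>x a = 0\<close> the inequality says \<open>sum x R \<ge> 1\<close>: all the mass lies in R.\<close>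

lemma closed_simplex_vanishes_outside:
  assumes x: "x \<in> closed_simplex P" and "finite P" "R \<subseteq> P"
    and le: "(1 - x a) * (1 - sum x R) \<le> M * (x a * sum x R)" and "x a = 0"
    and "\<psi> \<in> P - R"
  shows "x \<psi> = 0"
proof -
  have nonneg: "0 \<le> x \<psi>" for \<psi>
    using x unfolding closed_simplex_def by (cases "\<psi> \<in> P") auto
  have "1 \<le> sum x R"
    using le \<open>x a = 0\<close> by simp
  moreover have "sum x P = sum x (P - R) + sum x R"
    using assms(2,3) by (simp add: sum.subset_diff)
  ultimately have "sum x (P - R) = 0"
    using x nonneg sum_nonneg[of "P - R" x] by (simp add: closed_simplex_def)
  then show ?thesis
    using assms(2,6) nonneg by (simp add: sum_nonneg_eq_0_iff)
qed

lemma finite_Psi: "finite (Psi n)"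
proof (rule finite_subset)
  show "Psi n \<subseteq> {w. set w \<subseteq> Idx n \<times> Sgn \<and> length w \<le> 3}"
    by (auto simp: Psi_def)
  show "finite {w. set w \<subseteq> Idx n \<times> Sgn \<and> length w \<le> 3}"
    by (rule finite_lists_length_le) (auto simp: Idx_def Sgn_def)
qed

lemma uminus_Sgn: "t \<in> Sgn \<Longrightarrow> - t \<in> Sgn"
  by (auto simp: Sgn_def)

lemma one_Sgn: "1 \<in> Sgn"
  by (simp add: Sgn_def)

lemma Sgn_cases: "t \<in> Sgn \<Longrightarrow> p \<in> Sgn \<Longrightarrow> p \<noteq> t \<Longrightarrow> p = - t"
  by (auto simp: Sgn_def)

lemma other_index:
  assumes "n \<ge> 2"
  obtains j where "j \<in> Idx n" and "j \<noteq> i"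
  using assms that[of "if i = 1 then 2 else 1"] by (auto simp: Idx_def split: if_splits)

lemma S1_subset_Psi: "i \<in> Idx n \<Longrightarrow> t \<in> Sgn \<Longrightarrow> S1 n (i, t) \<subseteq> Psi n"
  by (auto simp: S1_def Psi_def)

lemma S1_heads: "S1 n l \<subseteq> {w. hd w = l}"
  by (auto simp: S1_def)

lemma S2_heads: "S2 n l m \<subseteq> {w. hd w = l}"
  by (auto simp: S2_def)

lemma Fam_subset_Psi:
  assumes "r \<in> Fam n"
  shows "fst r \<in> Psi n" and "snd r \<subseteq> Psi n"
proof -
  have "fst r \<in> Psi n \<and> snd r \<subseteq> Psi n"
    using assms unfolding Fam_def
  proof (elim UnE CollectE exE conjE)
    fix i j t s
    assume "r = ([(i, t), (j, s), (i, - t)], S1 n (i, t))"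
      and "i \<in> Idx n" "j \<in> Idx n" "t \<in> Sgn" "s \<in> Sgn" "i \<noteq> j"
    then show ?thesis
      using S1_subset_Psi[of i n t] by (auto simp: Psi_def Sgn_def)
  qed (auto simp: Psi_def)
  then show "fst r \<in> Psi n" and "snd r \<subseteq> Psi n"
    by auto
qed

lemma Psi_diff_heads_nonempty:
  assumes "n \<ge> 2" and "T \<subseteq> {w. hd w = l}"
  shows "Psi n - T \<noteq> {}"
proof -
  define i where "i = (if fst l = 1 then 2 else 1 :: nat)"
  have "[(i, 1), (i, 1)] \<in> Psi n - T"
    using assms by (auto simp: Psi_def Idx_def Sgn_def i_def)
  then show ?thesis
    by blast
qed

lemma Fam_snd_nonempty:
  assumes "n \<ge> 2" and "r \<in> Fam n"
  shows "snd r \<noteq> {}"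
  using assms(2) unfolding Fam_def
proof (elim UnE CollectE exE conjE)
  fix i t j s
  assume "r = ([(i, t), (j, s), (i, - t)], S1 n (i, t))"
  then show "snd r \<noteq> {}"
    by (auto simp: S1_def)
qed (use Psi_diff_heads_nonempty[OF assms(1) S1_heads]
    Psi_diff_heads_nonempty[OF assms(1) S2_heads] in auto)

lemma finite_Fam: "finite (Fam n)"
proof (rule finite_subset)
  show "Fam n \<subseteq> Psi n \<times> Pow (Psi n)"
    using Fam_subset_Psi by fastforce
  show "finite (Psi n \<times> Pow (Psi n))"
    using finite_Psi by blast
qed

lemma Fam_nonempty:
  assumes "n \<ge> 2"
  shows "Fam n \<noteq> {}"
proof -
  have "([(1, 1), (1, 1)], Psi n - S1 n (1, 1)) \<in> Fam n"
    using assms unfolding Fam_def by (auto simp: Idx_def Sgn_def)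
  then show ?thesis
    by blast
qed

definition conjugate_words :: "nat \<Rightarrow> word set" where
  "conjugate_words n = {[(i, t), (j, s), (i, - t)] | i j t s.
     i \<in> Idx n \<and> j \<in> Idx n \<and> t \<in> Sgn \<and> s \<in> Sgn \<and> i \<noteq> j}"

lemma conjugate_words_subset_Psi: "conjugate_words n \<subseteq> Psi n"
  by (auto simp: conjugate_words_def Psi_def Sgn_def)

lemma conjugate_word_in_S2:
  assumes "i \<in> Idx n" "j \<in> Idx n" "t \<in> Sgn" "s \<in> Sgn" "i \<noteq> j"
  shows "[(i, t), (j, s), (i, - t)] \<in> conjugate_words n \<inter> S2 n (i, t) (j, s)"
  using assms by (auto simp: conjugate_words_def S2_def uminus_Sgn)

lemma relation_excluding_conjugate_word:
  assumes "n \<ge> 2" and "\<psi> \<in> Psi n" and "\<psi> \<notin> conjugate_words n"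
  obtains r w where "r \<in> Fam n" "fst r = \<psi>" "w \<in> conjugate_words n" "w \<notin> snd r"
  using assms(2) unfolding Psi_def
proof (elim UnE CollectE exE conjE)
  fix i t
  assume \<psi>: "\<psi> = [(i, t), (i, t)]" and h: "i \<in> Idx n" "t \<in> Sgn"
  obtain j where j: "j \<in> Idx n" "j \<noteq> i"
    using other_index[OF assms(1)] .
  have "(\<psi>, Psi n - S1 n (i, t)) \<in> Fam n"
    using h unfolding \<psi> Fam_def by blast
  moreover have "[(i, t), (j, 1), (i, - t)] \<in> conjugate_words n \<inter> S1 n (i, t)"
    using h j by (auto simp: conjugate_words_def S1_def one_Sgn uminus_Sgn)
  ultimately show thesis
    using that by auto
next
  fix i j t s
  assume \<psi>: "\<psi> = [(i, t), (j, s), (j, s)]"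
    and h: "i \<in> Idx n" "j \<in> Idx n" "t \<in> Sgn" "s \<in> Sgn" "i \<noteq> j"
  have "(\<psi>, Psi n - S2 n (i, t) (j, s)) \<in> Fam n"
    using h unfolding \<psi> Fam_def by blast
  then show thesis
    using that conjugate_word_in_S2[OF h] by auto
next
  fix i j k t s p
  assume \<psi>: "\<psi> = [(i, t), (j, s), (k, p)]" and h: "i \<in> Idx n" "j \<in> Idx n" "k \<in> Idx n"
    "t \<in> Sgn" "s \<in> Sgn" "p \<in> Sgn" "i \<noteq> j" "j \<noteq> k"
  have "(\<psi>, Psi n - S2 n (j, s) (k, p)) \<in> Fam n"
  proof (cases "k = i")
    case True
    then have "p = t"
      using assms(3) h Sgn_cases[of t p] unfolding \<psi> conjugate_words_def by blast
    then show ?thesis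
      using h True unfolding \<psi> Fam_def by blast
  next
    case False
    then show ?thesis
      using h unfolding \<psi> Fam_def by blast
  qed
  then show thesis
    using that conjugate_word_in_S2[OF h(2,3,5,6,8)] by auto
qed

text \<open>The sublevel set \<open>F \<le> M\<close> with denominators cleared, taken in the closed simplex.\<close>

definition cleared_sublevel :: "nat \<Rightarrow> real \<Rightarrow> (word \<Rightarrow> real) set" where
  "cleared_sublevel n M = {x \<in> closed_simplex (Psi n). \<forall>r\<in>Fam n.
     (1 - x (fst r)) * (1 - sum x (snd r)) \<le> M * (x (fst r) * sum x (snd r))}"

lemma compact_cleared_sublevel: "compact (cleared_sublevel n M)"
proof -
  have "cleared_sublevel n M = closed_simplex (Psi n) \<inter> (\<Inter>r\<in>Fam n.
      {x. (1 - x (fst r)) * (1 - sum x (snd r)) \<le> M * (x (fst r) * sum x (snd r))})"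
    by (auto simp: cleared_sublevel_def)
  also have "compact \<dots>"
    using compact_closed_simplex[OF finite_Psi]
    by (intro compact_Int_closed closed_INT ballI closed_Collect_le continuous_intros; simp)
  finally show ?thesis .
qed

lemma cleared_sublevel_vanishes:
  assumes "x \<in> cleared_sublevel n M" and "r \<in> Fam n" and "x (fst r) = 0"
    and "\<psi> \<in> Psi n" and "\<psi> \<notin> snd r"
  shows "x \<psi> = 0"
proof -
  have x: "x \<in> closed_simplex (Psi n)"
    and le: "(1 - x (fst r)) * (1 - sum x (snd r)) \<le> M * (x (fst r) * sum x (snd r))"
    using assms(1,2) by (auto simp: cleared_sublevel_def)
  show ?thesis
    using closed_simplex_vanishes_outside[OF x finite_Psi Fam_subset_Psi(2)[OF assms(2)] le assms(3)]
      assms(4,5) by blast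
qed

lemma conjugate_word_nonzero:
  assumes x: "x \<in> cleared_sublevel n M" and "w \<in> conjugate_words n"
  shows "x w \<noteq> 0"
proof
  assume "x w = 0"
  obtain i j t s where w: "w = [(i, t), (j, s), (i, - t)]"
    and h: "i \<in> Idx n" "j \<in> Idx n" "t \<in> Sgn" "s \<in> Sgn" "i \<noteq> j"
    using assms(2) unfolding conjugate_words_def by blast
  define w' where "w' = [(j, s), (i, t), (j, - s)]"
  have rel: "(w, S1 n (i, t)) \<in> Fam n" and rel': "(w', S1 n (j, s)) \<in> Fam n"
    using h unfolding w w'_def Fam_def by blast+
  have "w' \<in> conjugate_words n"
    using h unfolding w'_def conjugate_words_def by blast
  then have "w' \<in> Psi n"
    using conjugate_words_subset_Psi by blast
  moreover have "w' \<notin> S1 n (i, t)"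
    using h S1_heads[of n "(i, t)"] by (auto simp: w'_def)
  ultimately have "x w' = 0"
    using cleared_sublevel_vanishes[OF x rel, of w'] \<open>x w = 0\<close> by simp
  have "x \<psi> = 0" if "\<psi> \<in> Psi n" for \<psi>
  proof (cases "\<psi> \<in> S1 n (i, t)")
    case True
    then have "hd \<psi> = (i, t)"
      using S1_heads by blast
    then have "\<psi> \<notin> S1 n (j, s)"
      using h S1_heads[of n "(j, s)"] by auto
    then show ?thesis
      using cleared_sublevel_vanishes[OF x rel', of \<psi>] \<open>x w' = 0\<close> that by simp
  next
    case False
    then show ?thesis
      using cleared_sublevel_vanishes[OF x rel, of \<psi>] \<open>x w = 0\<close> that by simp
  qed
  then have "sum x (Psi n) = 0"
    by simp
  then show False
    using x by (simp add: cleared_sublevel_def closed_simplex_def)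
qed

lemma cleared_sublevel_pos:
  assumes "n \<ge> 2" and x: "x \<in> cleared_sublevel n M" and "\<psi> \<in> Psi n"
  shows "0 < x \<psi>"
proof -
  have "x \<psi> \<noteq> 0"
  proof (cases "\<psi> \<in> conjugate_words n")
    case True
    then show ?thesis
      using conjugate_word_nonzero[OF x] by blast
  next
    case False
    then obtain r w where "r \<in> Fam n" "fst r = \<psi>" "w \<in> conjugate_words n" "w \<notin> snd r"
      using relation_excluding_conjugate_word[OF assms(1,3)] by blast
    moreover have "w \<in> Psi n"
      using \<open>w \<in> conjugate_words n\<close> conjugate_words_subset_Psi by blast
    ultimately show ?thesis
      using cleared_sublevel_vanishes[OF x, of r w] conjugate_word_nonzero[OF x, of w] by auto
  qed
  moreover have "0 \<le> x \<psi>"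
    using x assms(3) by (simp add: cleared_sublevel_def closed_simplex_def)
  ultimately show ?thesis
    by simp
qed

lemma Delta_subset_closed_simplex: "Delta n \<subseteq> closed_simplex (Psi n)"
  by (auto simp: Delta_def closed_simplex_def less_imp_le)

lemma Delta_relation_weights_pos:
  assumes "n \<ge> 2" and y: "y \<in> Delta n" and r: "r \<in> Fam n"
  shows "0 < y (fst r)" and "0 < sum y (snd r)"
proof -
  show "0 < y (fst r)"
    using y Fam_subset_Psi(1)[OF r] by (simp add: Delta_def)
  show "0 < sum y (snd r)"
  proof (rule sum_pos)
    show "finite (snd r)"
      using Fam_subset_Psi(2)[OF r] finite_Psi by (rule finite_subset)
    show "snd r \<noteq> {}"
      using Fam_snd_nonempty[OF assms(1) r] .
    show "0 < y \<psi>" if "\<psi> \<in> snd r" for \<psi>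
      using y Fam_subset_Psi(2)[OF r] that by (auto simp: Delta_def)
  qed
qed

lemma frel_le_iff:
  assumes "0 < x (fst r)" and "0 < sum x (snd r)"
  shows "frel r x \<le> M \<longleftrightarrow>
    (1 - x (fst r)) * (1 - sum x (snd r)) \<le> M * (x (fst r) * sum x (snd r))"
  using assms by (simp add: frel_def Let_def pos_divide_le_eq)

lemma FF_le_iff:
  assumes "n \<ge> 2"
  shows "FF n y \<le> M \<longleftrightarrow> (\<forall>r\<in>Fam n. frel r y \<le> M)"
  unfolding FF_def using finite_Fam Fam_nonempty[OF assms] by simp

lemma Delta_frel_le_iff:
  assumes "n \<ge> 2" and "y \<in> Delta n" and "r \<in> Fam n"
  shows "frel r y \<le> M \<longleftrightarrow>
    (1 - y (fst r)) * (1 - sum y (snd r)) \<le> M * (y (fst r) * sum y (snd r))"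
  using frel_le_iff Delta_relation_weights_pos[OF assms] by blast

lemma sublevel_FF_eq_cleared_sublevel:
  assumes "n \<ge> 2"
  shows "{y \<in> Delta n. FF n y \<le> M} = cleared_sublevel n M"
proof (intro equalityI subsetI)
  fix y
  assume "y \<in> {y \<in> Delta n. FF n y \<le> M}"
  then have y: "y \<in> Delta n" and "\<forall>r\<in>Fam n. frel r y \<le> M"
    by (simp_all add: FF_le_iff[OF assms])
  then show "y \<in> cleared_sublevel n M"
    using Delta_subset_closed_simplex
    by (auto simp: cleared_sublevel_def Delta_frel_le_iff[OF assms y])
next
  fix x
  assume x: "x \<in> cleared_sublevel n M"
  then have "x \<in> Delta n"
    using cleared_sublevel_pos[OF assms x]
    by (auto simp: Delta_def cleared_sublevel_def closed_simplex_def)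
  with x show "x \<in> {y \<in> Delta n. FF n y \<le> M}"
    by (simp add: FF_le_iff[OF assms] Delta_frel_le_iff[OF assms] cleared_sublevel_def)
qed

lemma FF_nonneg:
  assumes "n \<ge> 2" and y: "y \<in> Delta n"
  shows "0 \<le> FF n y"
proof -
  obtain r where r: "r \<in> Fam n"
    using Fam_nonempty[OF assms(1)] by blast
  have y': "y \<in> closed_simplex (Psi n)"
    using y Delta_subset_closed_simplex by blast
  have "y (fst r) \<le> 1"
    using closed_simplex_sum_le_1[OF y' finite_Psi, of "{fst r}"] Fam_subset_Psi(1)[OF r] by simp
  moreover have "sum y (snd r) \<le> 1"
    using closed_simplex_sum_le_1[OF y' finite_Psi Fam_subset_Psi(2)[OF r]] .
  ultimately have "0 \<le> frel r y"
    using Delta_relation_weights_pos[OF assms r] by (simp add: frel_def Let_def)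
  also have "frel r y \<le> FF n y"
    unfolding FF_def using r finite_Fam by (intro Max_ge) auto
  finally show ?thesis .
qed

lemma Delta_nonempty:
  assumes "n \<ge> 2"
  shows "Delta n \<noteq> {}"
proof -
  obtain r where "r \<in> Fam n"
    using Fam_nonempty[OF assms] by blast
  then have "card (Psi n) > 0"
    using Fam_subset_Psi(1) finite_Psi card_gt_0_iff by blast
  then have "(\<lambda>\<psi>. if \<psi> \<in> Psi n then 1 / card (Psi n) else 0) \<in> Delta n"
    by (simp add: Delta_def)
  then show ?thesis
    by blast
qed

theorem lemma5p2:
  fixes n :: nat
  assumes "n \<ge> 2"
  shows "\<exists>x\<in>Delta n. FF n x = (INF y\<in>Delta n. FF n y)"
proof (rule INF_attained_if_compact_sublevels)
  show "Delta n \<noteq> {}"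
    using Delta_nonempty[OF assms] .
  show "bdd_below (FF n ` Delta n)"
    using FF_nonneg[OF assms] by (intro bdd_belowI2)
  show "compact {x \<in> Delta n. FF n x \<le> M}" for M
    using compact_cleared_sublevel by (simp add: sublevel_FF_eq_cleared_sublevel[OF assms])
qed

end
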